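(* For each $\alpha \in (0,1)$ the map $T_\alpha$ is an AFN-map.
   Context: For $\alpha \in (0,1)$ let $D_\alpha = \bigcup_{n \ge 1} \big[ \frac{1}{n+\alpha}, \frac1n \big]$, $D_\alpha^{\mathsf c} = [0,1]\setminus D_\alpha$, $I_\alpha = [\min\{\alpha,1-\alpha\},1]$, and $T_\alpha : I_\alpha \to I_\alpha$, $T_\alpha(x) = \frac1x - \lfloor \frac1x \rfloor$ if $x \in D_\alpha^{\mathsf c}$, $T_\alpha(x) = 1 + \lfloor \frac1x \rfloor - \frac1x$ if $x \in D_\alpha$. Let $X$ be a finite union of bounded intervals. A map $T:X\to X$ is an AFN-map if there is a finite partition $\mathcal P$ of $X$ (up to finitely many points) into non-empty open intervals $I_i$ such that each restriction $T|_{I_i}$ is continuous, strictly monotone and twice differentiable, and: (A) (Adler's condition) $T''/(T')^2$ is bounded on $\bigcup_i I_i$; (F) (finite image condition) the collection $\{T(I_i): I_i\in\mathcal P\}$ is finite; (N) there is a finite set $\mathcal Z\subseteq\mathcal P$ such that each $Z\in\mathcal Z$ has an indifferent fixed point $x_Z$ (an endpoint of $Z$), i.e. $\lim_{x\to x_Z, x\in Z}T(x)=x_Z$ and $\lim_{x\to x_Z,x\in Z}T'(x)=1$, with $T'$ decreasing on $(-\infty,x_Z)\cap Z$ and increasing on $(x_Z,\infty)\cap Z$, and $T$ is uniformly expanding on sets bounded away from $\{x_Z : Z\in\mathcal Z\}$. *)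

theory Defs
  imports "HOL-Analysis.Analysis"
begin

definition D_alpha :: "real \<Rightarrow> real set" where
  "D_alpha \<alpha> = (\<Union>n\<in>{1::nat..}. {1 / (real n + \<alpha>) .. 1 / real n})"

definition I_alpha :: "real \<Rightarrow> real set" where
  "I_alpha \<alpha> = {min \<alpha> (1 - \<alpha>) .. 1}"

definition T_alpha :: "real \<Rightarrow> real \<Rightarrow> real" where
  "T_alpha \<alpha> x =
     (if x \<in> D_alpha \<alpha> then 1 + of_int \<lfloor>1 / x\<rfloor> - 1 / x
      else 1 / x - of_int \<lfloor>1 / x\<rfloor>)"

definition finite_union_bounded_intervals :: "real set \<Rightarrow> bool" where
  "finite_union_bounded_intervals X \<longleftrightarrow>
     (\<exists>S. finite S \<and> (\<forall>J\<in>S. is_interval J \<and> bounded J) \<and> X = \<Union>S)"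

definition AFN_map :: "real set \<Rightarrow> (real \<Rightarrow> real) \<Rightarrow> bool" where
  "AFN_map X T \<longleftrightarrow>
     finite_union_bounded_intervals X \<and> T ` X \<subseteq> X \<and>
     (\<exists>P :: real set set.
        finite P \<and>
        (\<forall>I\<in>P. \<exists>a b. a < b \<and> I = {a<..<b}) \<and>
        (\<forall>I\<in>P. \<forall>J\<in>P. I \<noteq> J \<longrightarrow> I \<inter> J = {}) \<and>
        \<Union>P \<subseteq> X \<and> finite (X - \<Union>P) \<and>
        (\<forall>I\<in>P. continuous_on I T \<and>
           ((\<forall>x\<in>I. \<forall>y\<in>I. x < y \<longrightarrow> T x < T y) \<or>
            (\<forall>x\<in>I. \<forall>y\<in>I. x < y \<longrightarrow> T x > T y)) \<and>
           (\<forall>x\<in>I. T differentiable (at x) \<and> (deriv T) differentiable (at x))) \<and>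
        \<comment> \<open>(A) Adler's condition\<close>
        (\<exists>C. \<forall>x\<in>\<Union>P. \<bar>deriv (deriv T) x / (deriv T x)\<^sup>2\<bar> \<le> C) \<and>
        \<comment> \<open>(F) finite image condition\<close>
        finite ((\<lambda>I. T ` I) ` P) \<and>
        \<comment> \<open>(N) indifferent fixed points and uniform expansion away from them\<close>
        (\<exists>Zs \<subseteq> P. \<exists>xZ :: real set \<Rightarrow> real.
           (\<forall>Z\<in>Zs. (xZ Z = Inf Z \<or> xZ Z = Sup Z) \<and>
              (T \<longlongrightarrow> xZ Z) (at (xZ Z) within Z) \<and>
              (deriv T \<longlongrightarrow> 1) (at (xZ Z) within Z) \<and>
              (\<forall>x\<in>Z. \<forall>y\<in>Z. x \<le> y \<and> y < xZ Z \<longrightarrow> deriv T y \<le> deriv T x) \<and>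
              (\<forall>x\<in>Z. \<forall>y\<in>Z. xZ Z < x \<and> x \<le> y \<longrightarrow> deriv T x \<le> deriv T y)) \<and>
           (\<forall>\<epsilon>>0. \<exists>\<rho>>1. \<forall>x\<in>\<Union>P.
              (\<forall>Z\<in>Zs. \<bar>x - xZ Z\<bar> \<ge> \<epsilon>) \<longrightarrow> \<bar>deriv T x\<bar> \<ge> \<rho>)))"

end

(* The points 1/n and 1/(n + alpha) cut [min alpha (1 - alpha), 1] into finitely many open
   pieces, on each of which T_alpha is a Moebius branch s/x + c with s = 1 or s = -1: it is
   x |-> n + 1 - 1/x on D_alpha and x |-> 1/x - n off it. Hence |T'| = 1/x^2 and
   |T''/T'^2| = 2x <= 2 on every piece, so Adler's condition holds and T expands uniformly away
   from x = 1. The only indifferent fixed point is x = 1, the right end of the branch 2 - 1/x. *)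

theory Submission
  imports Defs
begin

lemma finite_union_bounded_intervals_atLeastAtMost:
  "finite_union_bounded_intervals {a..b}"
  unfolding finite_union_bounded_intervals_def
  by (intro exI[of _ "{{a..b}}"]) auto

lemma reciprocal_branch_deriv:
  fixes f :: "real \<Rightarrow> real"
  assumes "open S" and "S \<subseteq> {0<..}" and "\<And>y. y \<in> S \<Longrightarrow> f y = s / y + c" and "x \<in> S"
  shows "(f has_real_derivative - s / x\<^sup>2) (at x)" and "deriv f x = - s / x\<^sup>2"
proof -
  have "((\<lambda>y. s / y + c) has_real_derivative - s / x\<^sup>2) (at x)"
    using assms by (auto intro!: derivative_eq_intros simp: power2_eq_square)
  then show "(f has_real_derivative - s / x\<^sup>2) (at x)"
    by (rule has_field_derivative_transform_within_open) (use assms in auto)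
  then show "deriv f x = - s / x\<^sup>2"
    by (rule DERIV_imp_deriv)
qed

lemma reciprocal_branch_deriv2:
  fixes f :: "real \<Rightarrow> real"
  assumes "open S" and "S \<subseteq> {0<..}" and "\<And>y. y \<in> S \<Longrightarrow> f y = s / y + c" and "x \<in> S"
  shows "(deriv f has_real_derivative 2 * s / x ^ 3) (at x)" and "deriv (deriv f) x = 2 * s / x ^ 3"
proof -
  have "((\<lambda>y. - s / y\<^sup>2) has_real_derivative 2 * s / x ^ 3) (at x)"
    using assms by (auto intro!: derivative_eq_intros simp: power2_eq_square power3_eq_cube field_simps)
  then show "(deriv f has_real_derivative 2 * s / x ^ 3) (at x)"
    by (rule has_field_derivative_transform_within_open)
      (use assms reciprocal_branch_deriv(2)[OF assms(1-3)] in auto)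
  then show "deriv (deriv f) x = 2 * s / x ^ 3"
    by (rule DERIV_imp_deriv)
qed

lemma reciprocal_branch_strict_mono:
  fixes f :: "real \<Rightarrow> real"
  assumes "S \<subseteq> {0<..}" and "s \<noteq> 0" and "\<And>y. y \<in> S \<Longrightarrow> f y = s / y + c"
  shows "(\<forall>x\<in>S. \<forall>y\<in>S. x < y \<longrightarrow> f x < f y) \<or> (\<forall>x\<in>S. \<forall>y\<in>S. x < y \<longrightarrow> f x > f y)"
proof (cases "s > 0")
  case True
  then show ?thesis
    using assms by (auto intro!: disjI2 simp: divide_strict_left_mono)
next
  case False
  then show ?thesis
    using assms by (auto intro!: disjI1 simp: divide_strict_left_mono_neg)
qed

lemma mem_D_alpha_iff:
  assumes "0 \<le> \<alpha>" and "\<alpha> < 1" and "0 < x"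
  shows "x \<in> D_alpha \<alpha> \<longleftrightarrow> 1 \<le> 1 / x \<and> frac (1 / x) \<le> \<alpha>"
proof
  assume "x \<in> D_alpha \<alpha>"
  then obtain k :: nat where k: "1 \<le> k" "1 / (real k + \<alpha>) \<le> x" "x \<le> 1 / real k"
    unfolding D_alpha_def by auto
  have "real k \<le> 1 / x" "1 / x \<le> real k + \<alpha>"
    using k assms by (simp_all add: field_simps)
  moreover from this have "\<lfloor>1 / x\<rfloor> = int k"
    using assms by (intro floor_unique) auto
  ultimately show "1 \<le> 1 / x \<and> frac (1 / x) \<le> \<alpha>"
    using k by (simp add: frac_def)
next
  assume x: "1 \<le> 1 / x \<and> frac (1 / x) \<le> \<alpha>"
  define k where "k = nat \<lfloor>1 / x\<rfloor>"
  have k: "1 \<le> k" "real k \<le> 1 / x" "1 / x \<le> real k + \<alpha>"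
    using x unfolding k_def frac_def by linarith+
  then have "1 / (real k + \<alpha>) \<le> x" "x \<le> 1 / real k"
    using assms by (simp_all add: field_simps)
  then show "x \<in> D_alpha \<alpha>"
    unfolding D_alpha_def using k by auto
qed

lemma T_alpha_eq_frac:
  assumes "0 \<le> \<alpha>" and "\<alpha> < 1" and "0 < x" and "x \<le> 1"
  shows "T_alpha \<alpha> x = (if frac (1 / x) \<le> \<alpha> then 1 - frac (1 / x) else frac (1 / x))"
proof -
  have "1 \<le> 1 / x"
    using assms by (simp add: field_simps)
  then show ?thesis
    using mem_D_alpha_iff[OF assms(1-3)] unfolding T_alpha_def frac_def by simp
qed

lemma T_alpha_image_I_alpha:
  assumes "0 < \<alpha>" and "\<alpha> < 1"
  shows "T_alpha \<alpha> ` I_alpha \<alpha> \<subseteq> I_alpha \<alpha>"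
proof clarify
  fix x assume "x \<in> I_alpha \<alpha>"
  then have "0 < x" "x \<le> 1"
    using assms unfolding I_alpha_def by (auto simp: min_def split: if_splits)
  then show "T_alpha \<alpha> x \<in> I_alpha \<alpha>"
    using assms frac_lt_1[of "1 / x"] frac_ge_0[of "1 / x"]
    unfolding T_alpha_eq_frac[OF less_imp_le[OF assms(1)] assms(2) \<open>0 < x\<close> \<open>x \<le> 1\<close>] I_alpha_def
    by auto
qed

definition recip_band :: "real \<Rightarrow> real \<Rightarrow> real \<Rightarrow> real set" where
  "recip_band l a b = {x. l < x \<and> a < 1 / x \<and> 1 / x < b}"

lemma recip_band_eq_interval:
  assumes "0 \<le> l" and "0 < a" and "a < b"
  shows "recip_band l a b = {max l (1 / b)<..<1 / a}"
proof (intro set_eqI iffI)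
  fix x assume "x \<in> recip_band l a b"
  then show "x \<in> {max l (1 / b)<..<1 / a}"
    using assms unfolding recip_band_def
    by (auto simp: field_simps)
next
  fix x assume "x \<in> {max l (1 / b)<..<1 / a}"
  then show "x \<in> recip_band l a b"
    using assms unfolding recip_band_def
    by (auto simp: field_simps)
qed

lemma recip_band_open_interval:
  assumes "0 \<le> l" and "0 < a" and "a < b" and "recip_band l a b \<noteq> {}"
  shows "\<exists>c d. c < d \<and> recip_band l a b = {c<..<d}"
  using assms recip_band_eq_interval[OF assms(1-3)] by (metis greaterThanLessThan_empty_iff not_less)

lemma floor_recip_band:
  assumes "x \<in> recip_band l a b" and "real n \<le> a" and "b \<le> real n + 1"
  shows "\<lfloor>1 / x\<rfloor> = int n"
  using assms unfolding recip_band_def by (intro floor_unique) auto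

locale alpha_map =
  fixes \<alpha> :: real
  assumes alpha_gt_0: "0 < \<alpha>" and alpha_lt_1: "\<alpha> < 1"
begin

definition left_end :: real where
  "left_end = min \<alpha> (1 - \<alpha>)"

lemma left_end_pos: "0 < left_end"
  using alpha_gt_0 alpha_lt_1 unfolding left_end_def by simp

lemma I_alpha_eq: "I_alpha \<alpha> = {left_end..1}"
  unfolding I_alpha_def left_end_def ..

definition D_piece :: "nat \<Rightarrow> real set" where
  "D_piece n = recip_band left_end (real n) (real n + \<alpha>)"

definition C_piece :: "nat \<Rightarrow> real set" where
  "C_piece n = recip_band left_end (real n + \<alpha>) (real n + 1)"

definition max_index :: nat where
  "max_index = nat \<lceil>1 / left_end\<rceil>"

definition pieces :: "real set set" where
  "pieces = (D_piece ` {1..max_index} \<union> C_piece ` {1..max_index}) - {{}}"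

lemma finite_pieces: "finite pieces"
  unfolding pieces_def by simp

lemma mem_pieces_cases:
  assumes "I \<in> pieces"
  obtains (D) n where "1 \<le> n" "I = D_piece n" "I \<noteq> {}"
        | (C) n where "1 \<le> n" "I = C_piece n" "I \<noteq> {}"
proof -
  have "I \<in> D_piece ` {1..max_index} \<union> C_piece ` {1..max_index}" "I \<noteq> {}"
    using assms unfolding pieces_def by auto
  then show thesis
    using that by fastforce
qed

lemma recip_band_bounds:
  assumes "x \<in> recip_band left_end a b" and "1 \<le> a"
  shows "left_end < x" "x < 1"
proof -
  show "left_end < x"
    using assms(1) unfolding recip_band_def by simp
  moreover have "1 < 1 / x"
    using assms unfolding recip_band_def by simp
  ultimately show "x < 1"
    using left_end_pos by (simp add: field_simps)
qed

lemma T_alpha_D_piece: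
  assumes "1 \<le> n" and "x \<in> D_piece n"
  shows "T_alpha \<alpha> x = real n + 1 - 1 / x"
proof -
  have x: "0 < x" "x < 1"
    using recip_band_bounds[of x "real n" "real n + \<alpha>"] assms left_end_pos
    unfolding D_piece_def by simp_all
  have "frac (1 / x) = 1 / x - real n"
    using floor_recip_band[OF assms(2)[unfolded D_piece_def], of n] alpha_lt_1 by (simp add: frac_def)
  moreover have "1 / x < real n + \<alpha>"
    using assms(2) unfolding D_piece_def recip_band_def by simp
  ultimately show ?thesis
    using T_alpha_eq_frac[of \<alpha> x] alpha_gt_0 alpha_lt_1 x by simp
qed

lemma T_alpha_C_piece:
  assumes "1 \<le> n" and "x \<in> C_piece n"
  shows "T_alpha \<alpha> x = 1 / x - real n"
proof -
  have x: "0 < x" "x < 1"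
    using recip_band_bounds[of x "real n + \<alpha>" "real n + 1"] assms left_end_pos alpha_gt_0
    unfolding C_piece_def by simp_all
  have "frac (1 / x) = 1 / x - real n"
    using floor_recip_band[OF assms(2)[unfolded C_piece_def], of n] alpha_gt_0 by (simp add: frac_def)
  moreover have "real n + \<alpha> < 1 / x"
    using assms(2) unfolding C_piece_def recip_band_def by simp
  ultimately show ?thesis
    using T_alpha_eq_frac[of \<alpha> x] alpha_gt_0 alpha_lt_1 x by simp
qed

lemma Union_pieces_subset: "\<Union>pieces \<subseteq> {left_end<..<1}"
proof
  fix x assume "x \<in> \<Union>pieces"
  then obtain I where I: "I \<in> pieces" "x \<in> I" by blast
  then show "x \<in> {left_end<..<1}"
  proof (cases rule: mem_pieces_cases)
    case (D n)
    then show ?thesis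
      using recip_band_bounds[of x "real n" "real n + \<alpha>"] I(2)
      unfolding D_piece_def by simp
  next
    case (C n)
    then show ?thesis
      using recip_band_bounds[of x "real n + \<alpha>" "real n + 1"] I(2) alpha_gt_0
      unfolding C_piece_def by simp
  qed
qed

lemma pieces_open_interval:
  assumes "I \<in> pieces"
  shows "\<exists>a b. a < b \<and> I = {a<..<b}"
  using assms
proof (cases rule: mem_pieces_cases)
  case (D n)
  then show ?thesis
    using recip_band_open_interval[of left_end "real n" "real n + \<alpha>"] left_end_pos alpha_gt_0
    unfolding D_piece_def by simp
next
  case (C n)
  then show ?thesis
    using recip_band_open_interval[of left_end "real n + \<alpha>" "real n + 1"] left_end_pos
      alpha_gt_0 alpha_lt_1
    unfolding C_piece_def by simp
qed

lemma pieces_open_positive: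
  assumes "I \<in> pieces"
  shows "open I" and "I \<subseteq> {0<..}"
  using pieces_open_interval[OF assms] assms Union_pieces_subset left_end_pos by fastforce+

lemma pieces_branch:
  assumes "I \<in> pieces"
  obtains s c where "s = 1 \<or> s = - 1" and "\<And>y. y \<in> I \<Longrightarrow> T_alpha \<alpha> y = s / y + c"
  using assms
proof (cases rule: mem_pieces_cases)
  case (D n)
  then show thesis
    using that[of "- 1" "real n + 1"] T_alpha_D_piece[of n] by simp
next
  case (C n)
  then show thesis
    using that[of 1 "- real n"] T_alpha_C_piece[of n] by simp
qed

lemma pieces_disjoint:
  assumes "I \<in> pieces" and "J \<in> pieces" and "I \<noteq> J"
  shows "I \<inter> J = {}"
proof (rule ccontr)
  assume "I \<inter> J \<noteq> {}"
  then obtain x where x: "x \<in> I" "x \<in> J" by blast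
  have floor_piece: "\<lfloor>1 / x\<rfloor> = int n" if "x \<in> D_piece n \<or> x \<in> C_piece n" for n
    using that floor_recip_band[of x left_end "real n" "real n + \<alpha>" n]
      floor_recip_band[of x left_end "real n + \<alpha>" "real n + 1" n] alpha_gt_0 alpha_lt_1
    unfolding D_piece_def C_piece_def by auto
  from assms(1) obtain n where n: "I = D_piece n \<or> I = C_piece n"
    by (cases rule: mem_pieces_cases) auto
  from assms(2) obtain k where k: "J = D_piece k \<or> J = C_piece k"
    by (cases rule: mem_pieces_cases) auto
  have "n = k"
    using floor_piece[of n] floor_piece[of k] x n k by auto
  then show False
    using x n k assms(3) unfolding D_piece_def C_piece_def recip_band_def by auto
qed

lemma pieces_branch_regular:
  assumes "I \<in> pieces"
  shows "continuous_on I (T_alpha \<alpha>)"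
    and "(\<forall>x\<in>I. \<forall>y\<in>I. x < y \<longrightarrow> T_alpha \<alpha> x < T_alpha \<alpha> y) \<or>
         (\<forall>x\<in>I. \<forall>y\<in>I. x < y \<longrightarrow> T_alpha \<alpha> x > T_alpha \<alpha> y)"
    and "\<forall>x\<in>I. T_alpha \<alpha> differentiable (at x) \<and> deriv (T_alpha \<alpha>) differentiable (at x)"
proof -
  obtain s c where s: "s = 1 \<or> s = - 1" and T: "\<And>y. y \<in> I \<Longrightarrow> T_alpha \<alpha> y = s / y + c"
    using pieces_branch[OF assms] by blast
  note open_pos = pieces_open_positive[OF assms]
  note D1 = reciprocal_branch_deriv(1)[OF open_pos T]
    and D2 = reciprocal_branch_deriv2(1)[OF open_pos T]
  show "continuous_on I (T_alpha \<alpha>)"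
    using D1 by (meson DERIV_isCont continuous_at_imp_continuous_on)
  show "(\<forall>x\<in>I. \<forall>y\<in>I. x < y \<longrightarrow> T_alpha \<alpha> x < T_alpha \<alpha> y) \<or>
        (\<forall>x\<in>I. \<forall>y\<in>I. x < y \<longrightarrow> T_alpha \<alpha> x > T_alpha \<alpha> y)"
    using reciprocal_branch_strict_mono[OF open_pos(2) _ T] s by auto
  show "\<forall>x\<in>I. T_alpha \<alpha> differentiable (at x) \<and> deriv (T_alpha \<alpha>) differentiable (at x)"
    using D1 D2 unfolding real_differentiable_def by blast
qed

lemma deriv_T_alpha_pieces:
  assumes "x \<in> \<Union>pieces"
  obtains s where "s = 1 \<or> s = - 1"
    and "deriv (T_alpha \<alpha>) x = - s / x\<^sup>2" and "deriv (deriv (T_alpha \<alpha>)) x = 2 * s / x ^ 3"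
proof -
  obtain I where I: "I \<in> pieces" "x \<in> I"
    using assms by blast
  obtain s c where s: "s = 1 \<or> s = - 1" and T: "\<And>y. y \<in> I \<Longrightarrow> T_alpha \<alpha> y = s / y + c"
    using pieces_branch[OF I(1)] by blast
  note open_pos = pieces_open_positive[OF I(1)]
  show thesis
    using that[OF s reciprocal_branch_deriv(2)[OF open_pos T I(2)]
        reciprocal_branch_deriv2(2)[OF open_pos T I(2)]] .
qed

lemma abs_deriv_T_alpha_pieces:
  assumes "x \<in> \<Union>pieces"
  shows "\<bar>deriv (T_alpha \<alpha>) x\<bar> = 1 / x\<^sup>2"
  by (rule deriv_T_alpha_pieces[OF assms]) auto

lemma Adler_bound_pieces:
  assumes "x \<in> \<Union>pieces"
  shows "\<bar>deriv (deriv (T_alpha \<alpha>)) x / (deriv (T_alpha \<alpha>) x)\<^sup>2\<bar> \<le> 2"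
proof (rule deriv_T_alpha_pieces[OF assms])
  fix s assume s: "s = 1 \<or> s = - 1"
    and D1: "deriv (T_alpha \<alpha>) x = - s / x\<^sup>2" and D2: "deriv (deriv (T_alpha \<alpha>)) x = 2 * s / x ^ 3"
  have x: "0 < x" "x < 1"
    using assms Union_pieces_subset left_end_pos by fastforce+
  then have "deriv (deriv (T_alpha \<alpha>)) x / (deriv (T_alpha \<alpha>) x)\<^sup>2 = 2 * s * x"
    unfolding D1 D2 using s by (auto simp: field_simps power2_eq_square power3_eq_cube)
  then show ?thesis
    using s x by auto
qed

lemma floor_recip_le_max_index:
  assumes "left_end < x"
  shows "nat \<lfloor>1 / x\<rfloor> \<le> max_index"
proof -
  have "1 / x < 1 / left_end"
    using assms left_end_pos by (simp add: field_simps)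
  then show ?thesis
    unfolding max_index_def by (intro nat_mono) linarith
qed

lemma mem_Union_pieces:
  assumes "left_end < x" and "x \<le> 1"
    and "x \<notin> (\<lambda>n. 1 / real n) ` {1..max_index}"
    and "x \<notin> (\<lambda>n. 1 / (real n + \<alpha>)) ` {1..max_index}"
  shows "x \<in> \<Union>pieces"
proof -
  have "1 \<le> 1 / x"
    using assms(1,2) left_end_pos by (simp add: field_simps)
  define n where "n = nat \<lfloor>1 / x\<rfloor>"
  have n: "1 \<le> n" "n \<le> max_index" "real n \<le> 1 / x" "1 / x < real n + 1"
    using \<open>1 \<le> 1 / x\<close> floor_recip_le_max_index[OF assms(1)] unfolding n_def by linarith+
  have "x = 1 / (1 / x)"
    by simp
  then have "1 / x \<noteq> real n" "1 / x \<noteq> real n + \<alpha>"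
    using assms(3,4) n(1,2) by (metis atLeastAtMost_iff image_eqI)+
  then have "x \<in> D_piece n \<or> x \<in> C_piece n"
    using n assms(1) unfolding D_piece_def C_piece_def recip_band_def by auto
  then show ?thesis
    unfolding pieces_def using n(1,2) by auto
qed

lemma finite_I_alpha_diff_pieces: "finite (I_alpha \<alpha> - \<Union>pieces)"
proof (rule finite_subset)
  show "I_alpha \<alpha> - \<Union>pieces \<subseteq>
      {left_end} \<union> (\<lambda>n. 1 / real n) ` {1..max_index} \<union> (\<lambda>n. 1 / (real n + \<alpha>)) ` {1..max_index}"
  proof
    fix x assume "x \<in> I_alpha \<alpha> - \<Union>pieces"
    then show "x \<in> {left_end} \<union> (\<lambda>n. 1 / real n) ` {1..max_index} \<union> (\<lambda>n. 1 / (real n + \<alpha>)) ` {1..max_index}"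
      using mem_Union_pieces[of x] unfolding I_alpha_eq by (cases "x = left_end") auto
  qed
qed simp

lemma D_piece_1_eq: "D_piece 1 = {max left_end (1 / (1 + \<alpha>))<..<1}"
  using recip_band_eq_interval[of left_end 1 "1 + \<alpha>"] left_end_pos alpha_gt_0
  unfolding D_piece_def by simp

lemma D_piece_1_nonempty: "max left_end (1 / (1 + \<alpha>)) < 1"
  using alpha_gt_0 alpha_lt_1 unfolding left_end_def by (simp add: field_simps)

lemma D_piece_1_in_pieces: "D_piece 1 \<in> pieces"
proof -
  have "1 \<le> max_index"
    using floor_recip_le_max_index[of 1] D_piece_1_nonempty by simp
  then have "D_piece 1 \<in> D_piece ` {1..max_index}"
    by simp
  moreover have "D_piece 1 \<noteq> {}"
    using D_piece_1_eq D_piece_1_nonempty by (simp del: max_less_iff_conj)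
  ultimately show ?thesis
    unfolding pieces_def by simp
qed

lemma T_alpha_D_piece_1:
  assumes "y \<in> D_piece 1"
  shows "T_alpha \<alpha> y = 2 - 1 / y"
  using T_alpha_D_piece[OF _ assms] by simp

lemma deriv_T_alpha_D_piece_1:
  assumes "y \<in> D_piece 1"
  shows "deriv (T_alpha \<alpha>) y = 1 / y\<^sup>2"
proof -
  have "open (D_piece 1)" "D_piece 1 \<subseteq> {0<..}"
    using D_piece_1_eq left_end_pos by auto
  then show ?thesis
    using reciprocal_branch_deriv(2)[of "D_piece 1" "T_alpha \<alpha>" "- 1" 2] T_alpha_D_piece_1 assms
    by simp
qed

lemma indifferent_fixed_point_D_piece_1:
  shows "(T_alpha \<alpha> \<longlongrightarrow> 1) (at 1 within D_piece 1)"
    and "(deriv (T_alpha \<alpha>) \<longlongrightarrow> 1) (at 1 within D_piece 1)"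
    and "\<And>x y. x \<in> D_piece 1 \<Longrightarrow> y \<in> D_piece 1 \<Longrightarrow> x \<le> y \<Longrightarrow>
           deriv (T_alpha \<alpha>) y \<le> deriv (T_alpha \<alpha>) x"
proof -
  have "((\<lambda>y. 2 - 1 / y) \<longlongrightarrow> 1) (at 1 within D_piece 1)"
    by (rule tendsto_eq_intros refl | simp)+
  then show "(T_alpha \<alpha> \<longlongrightarrow> 1) (at 1 within D_piece 1)"
    by (rule Lim_cong_within[THEN iffD2, rotated -1]) (auto simp: T_alpha_D_piece_1)
  have "((\<lambda>y. 1 / y\<^sup>2) \<longlongrightarrow> 1) (at 1 within D_piece 1)"
    by (rule tendsto_eq_intros refl | simp)+
  then show "(deriv (T_alpha \<alpha>) \<longlongrightarrow> 1) (at 1 within D_piece 1)"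
    by (rule Lim_cong_within[THEN iffD2, rotated -1]) (auto simp: deriv_T_alpha_D_piece_1)
  fix x y assume xy: "x \<in> D_piece 1" "y \<in> D_piece 1" "x \<le> y"
  then have "0 < x"
    using D_piece_1_eq left_end_pos by auto
  then have "x\<^sup>2 \<le> y\<^sup>2"
    using xy(3) by (intro power_mono) auto
  then show "deriv (T_alpha \<alpha>) y \<le> deriv (T_alpha \<alpha>) x"
    using xy \<open>0 < x\<close> by (simp add: deriv_T_alpha_D_piece_1 frac_le)
qed

lemma uniform_expansion_pieces:
  assumes "0 < \<epsilon>"
  shows "\<exists>\<rho>>1. \<forall>x\<in>\<Union>pieces. \<epsilon> \<le> \<bar>x - 1\<bar> \<longrightarrow> \<rho> \<le> \<bar>deriv (T_alpha \<alpha>) x\<bar>"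
proof -
  define e where "e = min \<epsilon> (1 / 2)"
  have e: "0 < e" "e \<le> 1 / 2" "e \<le> \<epsilon>"
    using assms unfolding e_def by auto
  have "1 / (1 - e) \<le> \<bar>deriv (T_alpha \<alpha>) x\<bar>" if x: "x \<in> \<Union>pieces" "\<epsilon> \<le> \<bar>x - 1\<bar>" for x
  proof -
    have "0 < x" "x < 1"
      using x(1) Union_pieces_subset left_end_pos by fastforce+
    then have "1 / (1 - e) \<le> 1 / x"
      using x(2) e by (intro divide_left_mono) auto
    also have "\<dots> \<le> 1 / x\<^sup>2"
      using \<open>0 < x\<close> \<open>x < 1\<close> by (simp add: field_simps power2_eq_square)
    also have "\<dots> = \<bar>deriv (T_alpha \<alpha>) x\<bar>"
      using abs_deriv_T_alpha_pieces[OF x(1)] by simp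
    finally show ?thesis .
  qed
  moreover have "1 < 1 / (1 - e)"
    using e by (simp add: field_simps)
  ultimately show ?thesis
    by blast
qed

lemma AFN_map_T_alpha: "AFN_map (I_alpha \<alpha>) (T_alpha \<alpha>)"
  unfolding AFN_map_def
proof (intro conjI, goal_cases intervals invariant partition)
  case intervals
  show ?case
    unfolding I_alpha_eq by (rule finite_union_bounded_intervals_atLeastAtMost)
next
  case invariant
  show ?case
    using alpha_gt_0 alpha_lt_1 by (rule T_alpha_image_I_alpha)
next
  case partition
  show ?case
  proof (rule exI[of _ pieces], intro conjI, goal_cases finite intervals disjoint subset cofinite
      branches Adler finite_image indifferent)
    case Adler
    show ?case
      using Adler_bound_pieces by blast
  next
    case indifferent
    show ?case
    proof (rule exI[of _ "{D_piece 1}"], intro conjI exI[of _ "\<lambda>_. 1"] ballI allI impI)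
      fix \<epsilon> :: real assume "0 < \<epsilon>"
      then show "\<exists>\<rho>>1. \<forall>x\<in>\<Union>pieces.
          (\<forall>Z\<in>{D_piece 1}. \<epsilon> \<le> \<bar>x - 1\<bar>) \<longrightarrow> \<rho> \<le> \<bar>deriv (T_alpha \<alpha>) x\<bar>"
        using uniform_expansion_pieces by simp
    qed (use D_piece_1_in_pieces D_piece_1_eq D_piece_1_nonempty
           indifferent_fixed_point_D_piece_1 in auto)
  qed (use finite_pieces pieces_open_interval pieces_disjoint Union_pieces_subset I_alpha_eq
         finite_I_alpha_diff_pieces pieces_branch_regular in auto)
qed

end

theorem lemma2p2:
  fixes \<alpha> :: real
  assumes "0 < \<alpha>" and "\<alpha> < 1"
  shows "AFN_map (I_alpha \<alpha>) (T_alpha \<alpha>)"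
proof -
  interpret alpha_map \<alpha>
    using assms by unfold_locales
  show ?thesis
    by (rule AFN_map_T_alpha)
qed

end
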